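(* Let $\beta>0$, $k\in\mathbb N$ with $\beta\in(2k,2k+2]$, $f\in\mathcal H(\beta,\mathcal P)$ with $\mathcal P=\{\gamma,l^+,L,\varepsilon,C,\alpha,\xi,M\}$, and $p\in(0,1)$. Then for all $x\in\mathbb R$: (1) for every positive integer $i$ and every $\sigma<1-p^{1/i}$, $K_\sigma^if(x)\le M\big(\frac{2}{\sqrt3}\big)^i\psi(px)$; (2) for every $\sigma<1-p^{1/k}$ (read as $\sigma<1$ when $k=0$), $\max\big(f_k(x),g_k(x),\tfrac12h_k(x)\big)\le 2M\big(\frac4{\sqrt3}\big)^k\psi(px)$.
   Context: $\psi(x)=\pi^{-1/2}e^{-x^2}$, $\psi_\sigma(x)=\sigma^{-1}\psi(x/\sigma)$, $K_\sigma g=g*\psi_\sigma$, $K_\sigma^i$ its $i$-fold iterate, $\Delta_\sigma g=K_\sigma g-g$. Given $f$ and $\sigma$: $f_0=f$, $f_{j+1}=f-\Delta_\sigma f_j$; $J_{\sigma,k}=\{x:f_k(x)>\frac12f(x)\}$; $g_k=f_k\mathbf 1_{J_{\sigma,k}}+\frac12f\mathbf 1_{J_{\sigma,k}^c}$; $h_k=g_k/\int g_k$. For $\beta>0$, $r$ is the largest integer strictly less than $\beta$; $\mathcal H(\beta,\mathcal P)$ ($L$ polynomial, others positive constants) is the set of probability densities $f$ with $\ln f$ $r$ times differentiable, $|(\ln f)^{(r)}(x)-(\ln f)^{(r)}(y)|\le r!L(x)|y-x|^{\beta-r}$ for $|x-y|\le\gamma$, $|(\ln f)^{(j)}(0)|\le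 l^+$; $\int|(\ln f)^{(j)}|^{(2\beta+\varepsilon)/j}f\le C$, $\int|L|^{2+\varepsilon/\beta}f\le C$; $f(x)\le M\psi(x)$; $f>0$ nondecreasing on $(-\infty,-\alpha)$, nonincreasing on $(\alpha,\infty)$, $f\ge\xi$ on $[-\alpha,\alpha]$. *)

theory Defs
  imports "HOL-Analysis.Analysis" "HOL-Computational_Algebra.Polynomial"
begin

definition psi :: "real \<Rightarrow> real" where
  "psi x = exp (- (x^2)) / sqrt pi"

definition psi_s :: "real \<Rightarrow> real \<Rightarrow> real" where
  "psi_s \<sigma> x = psi (x / \<sigma>) / \<sigma>"

definition Ksig :: "real \<Rightarrow> (real \<Rightarrow> real) \<Rightarrow> real \<Rightarrow> real" where
  "Ksig \<sigma> g x = (\<integral>y. g (x - y) * psi_s \<sigma> y \<partial>lborel)"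

definition Delta :: "real \<Rightarrow> (real \<Rightarrow> real) \<Rightarrow> real \<Rightarrow> real" where
  "Delta \<sigma> g x = Ksig \<sigma> g x - g x"

primrec fseq :: "(real \<Rightarrow> real) \<Rightarrow> real \<Rightarrow> nat \<Rightarrow> real \<Rightarrow> real" where
  "fseq f \<sigma> 0 = f"
| "fseq f \<sigma> (Suc j) = (\<lambda>x. f x - Delta \<sigma> (fseq f \<sigma> j) x)"

definition Jset :: "(real \<Rightarrow> real) \<Rightarrow> real \<Rightarrow> nat \<Rightarrow> real set" where
  "Jset f \<sigma> k = {x. fseq f \<sigma> k x > f x / 2}"

definition gseq :: "(real \<Rightarrow> real) \<Rightarrow> real \<Rightarrow> nat \<Rightarrow> real \<Rightarrow> real" where
  "gseq f \<sigma> k x = (if x \<in> Jset f \<sigma> k then fseq f \<sigma> k x else f x / 2)"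

definition hseq :: "(real \<Rightarrow> real) \<Rightarrow> real \<Rightarrow> nat \<Rightarrow> real \<Rightarrow> real" where
  "hseq f \<sigma> k x = gseq f \<sigma> k x / (\<integral>y. gseq f \<sigma> k y \<partial>lborel)"

text \<open>r = largest integer strictly less than beta.\<close>
definition rdeg :: "real \<Rightarrow> nat" where
  "rdeg \<beta> = nat (\<lceil>\<beta>\<rceil> - 1)"

definition Hclass ::
  "real \<Rightarrow> real \<Rightarrow> real \<Rightarrow> real poly \<Rightarrow> real \<Rightarrow> real \<Rightarrow> real \<Rightarrow> real \<Rightarrow> real
   \<Rightarrow> (real \<Rightarrow> real) set" where
  "Hclass \<beta> \<gamma> lp L \<epsilon> C \<alpha> \<xi> M = {f.
     let r = rdeg \<beta>; lf = (\<lambda>x. ln (f x)); D = (\<lambda>j. (deriv ^^ j) lf) in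
     \<comment> \<open>probability density, positive\<close>
     f \<in> borel_measurable lborel \<and> (\<forall>x. 0 < f x) \<and>
     (\<integral>\<^sup>+x. ennreal (f x) \<partial>lborel) = 1 \<and>
     \<comment> \<open>ln f is r times differentiable\<close>
     (\<forall>j<r. \<forall>x. D j differentiable (at x)) \<and>
     \<comment> \<open>local Hoelder condition on the r-th derivative\<close>
     (\<forall>x y. \<bar>x - y\<bar> \<le> \<gamma> \<longrightarrow>
        \<bar>D r x - D r y\<bar> \<le> fact r * poly L x * \<bar>y - x\<bar> powr (\<beta> - real r)) \<and>
     (\<forall>j\<in>{1..r}. \<bar>D j 0\<bar> \<le> lp) \<and>
     (\<forall>j\<in>{1..r}. (\<integral>\<^sup>+x. ennreal (\<bar>D j x\<bar> powr ((2 * \<beta> + \<epsilon>) / real j) * f x) \<partial>lborel)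
                    \<le> ennreal C) \<and>
     (\<integral>\<^sup>+x. ennreal (\<bar>poly L x\<bar> powr (2 + \<epsilon> / \<beta>) * f x) \<partial>lborel) \<le> ennreal C \<and>
     (\<forall>x. f x \<le> M * psi x) \<and>
     (\<forall>x y. x \<le> y \<and> y < - \<alpha> \<longrightarrow> f x \<le> f y) \<and>
     (\<forall>x y. \<alpha> < x \<and> x \<le> y \<longrightarrow> f y \<le> f x) \<and>
     (\<forall>x. - \<alpha> \<le> x \<and> x \<le> \<alpha> \<longrightarrow> \<xi> \<le> f x)}"

end

theory Submission
  imports Defs "HOL-Probability.Probability"
begin

text \<open>
  \<open>psi_s \<sigma>\<close> is the centred normal density with variance \<open>\<sigma>\<^sup>2 / 2\<close>, so Gaussian widths add in
  quadrature under convolution: if \<open>\<bar>g\<bar> \<le> c psi(x / t)\<close> then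
  \<open>\<bar>K\<^sub>\<sigma> g\<bar> \<le> c psi(x / sqrt(t\<^sup>2 + \<sigma>\<^sup>2))\<close>.  Iterating, \<open>K\<^sub>\<sigma>\<^sup>i f\<close> is dominated by
  \<open>M psi(x / sqrt(1 + i \<sigma>\<^sup>2))\<close>, and since \<open>f\<^sub>j\<^sub>+\<^sub>1 = f - K\<^sub>\<sigma> f\<^sub>j + f\<^sub>j\<close> the functions \<open>f\<^sub>j\<close> are
  dominated by \<open>(2\<^sup>j\<^sup>+\<^sup>1 - 1) M psi(x / sqrt(1 + j \<sigma>\<^sup>2))\<close>.  The condition \<open>\<sigma> < 1 - p\<^sup>1\<^sup>/\<^sup>i\<close> gives
  \<open>p sqrt(1 + i \<sigma>\<^sup>2) \<le> (1 - \<sigma>)\<^sup>i (1 + \<sigma>)\<^sup>i \<le> 1\<close>, so the widened Gaussian is dominated by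
  \<open>psi(p x)\<close>.  Finally \<open>\<integral>g\<^sub>k \<ge> \<integral>f / 2 = 1/2\<close>, whence \<open>h\<^sub>k \<le> 2 g\<^sub>k\<close>.
\<close>

lemma psi_pos: "0 < psi x"
  by (simp add: psi_def)

lemma psi_le_psi: "b\<^sup>2 \<le> a\<^sup>2 \<Longrightarrow> psi a \<le> psi b"
  by (simp add: psi_def divide_right_mono)

lemma psi_div_mono:
  assumes "0 < a" "a \<le> b"
  shows "psi (x / a) \<le> psi (x / b)"
  using assms by (intro psi_le_psi) (simp add: power_divide frac_le)

lemma psi_div_le_psi_mult:
  assumes "0 < t" "0 \<le> p" "p * t \<le> 1"
  shows "psi (x / t) \<le> psi (p * x)"
proof (rule psi_le_psi)
  have "p\<^sup>2 * t\<^sup>2 \<le> 1"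
    using assms by (metis power_mult_distrib mult_nonneg_nonneg less_imp_le power_le_one)
  then have "p\<^sup>2 \<le> 1 / t\<^sup>2"
    using assms by (simp add: field_simps)
  then have "p\<^sup>2 * x\<^sup>2 \<le> x\<^sup>2 / t\<^sup>2"
    using mult_right_mono[of "p\<^sup>2" "1 / t\<^sup>2" "x\<^sup>2"] by simp
  then show "(p * x)\<^sup>2 \<le> (x / t)\<^sup>2"
    by (simp add: power_mult_distrib power_divide)
qed

lemma psi_div_eq_psi_s: "t \<noteq> 0 \<Longrightarrow> psi (y / t) = t * psi_s t y"
  by (simp add: psi_s_def)

lemma psi_s_nonneg: "0 < \<sigma> \<Longrightarrow> 0 \<le> psi_s \<sigma> y"
  using psi_pos[of "y / \<sigma>"] by (simp add: psi_s_def)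

lemma psi_s_eq_normal_density: "0 < \<sigma> \<Longrightarrow> psi_s \<sigma> x = normal_density 0 (\<sigma> / sqrt 2) x"
  by (simp add: psi_s_def psi_def normal_density_def power_divide real_sqrt_mult field_simps)

lemma psi_measurable [measurable]: "psi \<in> borel_measurable borel"
  unfolding psi_def by (intro borel_measurable_continuous_onI continuous_intros) auto

lemma psi_s_measurable [measurable]: "psi_s \<sigma> \<in> borel_measurable borel"
  unfolding psi_s_def by measurable

lemma psi_s_convolution:
  assumes t: "0 < t" and \<sigma>: "0 < \<sigma>"
  shows "has_bochner_integral lborel (\<lambda>y. psi_s t (x - y) * psi_s \<sigma> y)
           (psi_s (sqrt (t\<^sup>2 + \<sigma>\<^sup>2)) x)"
proof (rule has_bochner_integral_nn_integral)
  have "(t / sqrt 2)\<^sup>2 + (\<sigma> / sqrt 2)\<^sup>2 = (t\<^sup>2 + \<sigma>\<^sup>2) / 2"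
    by (simp add: power_divide add_divide_distrib)
  then have "sqrt ((t / sqrt 2)\<^sup>2 + (\<sigma> / sqrt 2)\<^sup>2) = sqrt (t\<^sup>2 + \<sigma>\<^sup>2) / sqrt 2"
    by (simp only: real_sqrt_divide)
  then show "(\<integral>\<^sup>+y. ennreal (psi_s t (x - y) * psi_s \<sigma> y) \<partial>lborel)
               = ennreal (psi_s (sqrt (t\<^sup>2 + \<sigma>\<^sup>2)) x)"
    using fun_cong[OF conv_normal_density_zero_mean, of "t / sqrt 2" "\<sigma> / sqrt 2" x] t \<sigma>
    by (simp add: psi_s_eq_normal_density add_pos_nonneg)
qed (use t \<sigma> in \<open>auto intro!: AE_I2 mult_nonneg_nonneg psi_s_nonneg add_pos_pos\<close>)

lemma psi_bound_nonneg: "(\<And>y. \<bar>g y\<bar> \<le> c * psi (y / t)) \<Longrightarrow> 0 \<le> c"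
  by (metis abs_ge_zero order_trans psi_pos zero_le_mult_iff not_le)

lemma Ksig_measurable [measurable]:
  assumes [measurable]: "g \<in> borel_measurable borel"
  shows "Ksig \<sigma> g \<in> borel_measurable borel"
  unfolding Ksig_def by (rule lborel.borel_measurable_lebesgue_integral[where N = borel]) measurable

lemma Ksig_iterate_measurable [measurable]:
  "g \<in> borel_measurable borel \<Longrightarrow> (Ksig \<sigma> ^^ i) g \<in> borel_measurable borel"
  by (induction i) auto

lemma Ksig_abs_le:
  assumes [measurable]: "g \<in> borel_measurable borel"
    and g: "\<And>y. \<bar>g y\<bar> \<le> c * psi (y / t)" and t: "0 < t" and \<sigma>: "0 < \<sigma>"
  shows "\<bar>Ksig \<sigma> g x\<bar> \<le> c * psi (x / sqrt (t\<^sup>2 + \<sigma>\<^sup>2))"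
proof -
  define s where "s = sqrt (t\<^sup>2 + \<sigma>\<^sup>2)"
  have s: "0 < s" "t \<le> s"
    using t by (auto simp: s_def add_pos_nonneg real_le_rsqrt)
  have c: "0 \<le> c"
    using g by (rule psi_bound_nonneg)
  define G where "G y = c * t * (psi_s t (x - y) * psi_s \<sigma> y)" for y
  have G: "has_bochner_integral lborel G (c * t * psi_s s x)"
    unfolding G_def s_def by (intro has_bochner_integral_mult_right psi_s_convolution t \<sigma>)
  have dom: "\<bar>g (x - y) * psi_s \<sigma> y\<bar> \<le> G y" for y
    using mult_right_mono[OF g[of "x - y"] psi_s_nonneg[OF \<sigma>, of y]] psi_s_nonneg[OF \<sigma>, of y] t
    by (simp add: G_def abs_mult psi_div_eq_psi_s mult.assoc)
  have "integrable lborel (\<lambda>y. g (x - y) * psi_s \<sigma> y)"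
    by (intro Bochner_Integration.integrable_bound[OF integrable.intros[OF G]])
      (auto intro!: AE_I2 order_trans[OF dom abs_ge_self])
  then have "\<bar>Ksig \<sigma> g x\<bar> \<le> integral\<^sup>L lborel G"
    unfolding Ksig_def
    by (intro order_trans[OF integral_abs_bound] integral_mono integrable.intros[OF G] dom)
       auto
  also have "\<dots> = c * (t / s) * psi (x / s)"
    using G by (simp add: has_bochner_integral_iff psi_s_def)
  also have "\<dots> \<le> c * psi (x / s)"
    using s c psi_pos[of "x / s"] by (intro mult_right_mono mult_left_le) auto
  finally show ?thesis
    unfolding s_def .
qed

lemma Ksig_iterate_abs_le:
  assumes [measurable]: "g \<in> borel_measurable borel"
    and g: "\<And>y. \<bar>g y\<bar> \<le> c * psi (y / t)" and t: "0 < t" and \<sigma>: "0 < \<sigma>"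
  shows "\<bar>(Ksig \<sigma> ^^ i) g x\<bar> \<le> c * psi (x / sqrt (t\<^sup>2 + real i * \<sigma>\<^sup>2))"
proof (induction i arbitrary: x)
  case 0
  then show ?case
    using g t by simp
next
  case (Suc i)
  have "0 < sqrt (t\<^sup>2 + real i * \<sigma>\<^sup>2)"
    using t by (simp add: add_pos_nonneg)
  from Ksig_abs_le[OF _ Suc this \<sigma>] show ?case
    by (simp add: algebra_simps)
qed

lemma fseq_measurable [measurable]:
  assumes [measurable]: "f \<in> borel_measurable borel"
  shows "fseq f \<sigma> j \<in> borel_measurable borel"
  by (induction j) (simp_all add: Delta_def)

lemma fseq_abs_le:
  assumes [measurable]: "f \<in> borel_measurable borel"
    and f: "\<And>y. \<bar>f y\<bar> \<le> M * psi (y / t)" and t: "0 < t" and \<sigma>: "0 < \<sigma>"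
  shows "\<bar>fseq f \<sigma> j x\<bar> \<le> (2 ^ (j + 1) - 1) * M * psi (x / sqrt (t\<^sup>2 + real j * \<sigma>\<^sup>2))"
proof (induction j arbitrary: x)
  case 0
  then show ?case
    using f t by simp
next
  case (Suc j)
  define s where "s = sqrt (t\<^sup>2 + real j * \<sigma>\<^sup>2)"
  define s' where "s' = sqrt (t\<^sup>2 + real (Suc j) * \<sigma>\<^sup>2)"
  define c :: real where "c = (2 ^ (j + 1) - 1) * M"
  have s: "0 < s" "t \<le> s'"
    using t by (auto simp: s_def s'_def add_pos_nonneg real_le_rsqrt)
  have s_le: "s \<le> s'"
    by (simp add: s_def s'_def mult_right_mono)
  have IH: "\<bar>fseq f \<sigma> j y\<bar> \<le> c * psi (y / s)" for y
    using Suc unfolding c_def s_def .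
  have "\<bar>fseq f \<sigma> (Suc j) x\<bar> \<le> \<bar>f x\<bar> + \<bar>Ksig \<sigma> (fseq f \<sigma> j) x\<bar> + \<bar>fseq f \<sigma> j x\<bar>"
    by (simp add: Delta_def)
  also have "\<dots> \<le> M * psi (x / s') + c * psi (x / s') + c * psi (x / s')"
  proof -
    have "\<bar>f x\<bar> \<le> M * psi (x / s')"
      using f[of x] psi_div_mono[OF t s(2)] psi_bound_nonneg[OF f] by (meson mult_left_mono order_trans)
    moreover have "\<bar>Ksig \<sigma> (fseq f \<sigma> j) x\<bar> \<le> c * psi (x / s')"
      using Ksig_abs_le[OF _ IH s(1) \<sigma>, of x] by (simp add: s_def s'_def algebra_simps)
    moreover have "\<bar>fseq f \<sigma> j x\<bar> \<le> c * psi (x / s')"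
      using IH[of x] psi_div_mono[OF s(1) s_le] psi_bound_nonneg[OF IH] by (meson mult_left_mono order_trans)
    ultimately show ?thesis
      by linarith
  qed
  also have "\<dots> = (2 ^ (Suc j + 1) - 1) * M * psi (x / s')"
    by (simp add: c_def algebra_simps)
  finally show ?case
    unfolding s'_def .
qed

lemma mult_sqrt_one_plus_le_one:
  fixes p \<sigma> :: real and i :: nat
  assumes p: "0 < p" and i: "1 \<le> i" and \<sigma>: "0 < \<sigma>" "\<sigma> < 1 - p powr (1 / real i)"
  shows "p * sqrt (1 + real i * \<sigma>\<^sup>2) \<le> 1"
proof -
  have root_pos: "0 < p powr (1 / real i)"
    using p by simp
  then have \<sigma>1: "\<sigma> < 1"
    using \<sigma> by linarith
  have "p = (p powr (1 / real i)) ^ i"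
    using p i by (simp add: powr_realpow[symmetric] powr_powr)
  also have "\<dots> \<le> (1 - \<sigma>) ^ i"
    using \<sigma> root_pos by (intro power_mono) auto
  finally have p_le: "p \<le> (1 - \<sigma>) ^ i" .
  have "\<sigma>\<^sup>2 \<le> \<sigma>"
    using \<sigma> \<sigma>1 by (simp add: power2_eq_square)
  then have "real i * \<sigma>\<^sup>2 \<le> 2 * real i * \<sigma> + (real i * \<sigma>)\<^sup>2"
    using mult_left_mono[of "\<sigma>\<^sup>2" \<sigma> "real i"] \<sigma>
      zero_le_power2[of "real i * \<sigma>"] mult_nonneg_nonneg[of "real i" \<sigma>]
    by linarith
  then have "1 + real i * \<sigma>\<^sup>2 \<le> (1 + real i * \<sigma>)\<^sup>2"
    by (simp add: power2_eq_square algebra_simps)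
  then have "sqrt (1 + real i * \<sigma>\<^sup>2) \<le> 1 + real i * \<sigma>"
    using \<sigma> by (intro real_le_lsqrt) auto
  also have "\<dots> \<le> (1 + \<sigma>) ^ i"
    using Bernoulli_inequality[of \<sigma> i] \<sigma> by simp
  finally have "p * sqrt (1 + real i * \<sigma>\<^sup>2) \<le> (1 - \<sigma>) ^ i * (1 + \<sigma>) ^ i"
    using p_le \<sigma>1 by (intro mult_mono) auto
  also have "\<dots> = (1 - \<sigma>\<^sup>2) ^ i"
    by (simp add: power_mult_distrib[symmetric] power2_eq_square algebra_simps)
  also have "\<dots> \<le> 1"
    using \<sigma> \<sigma>1 by (intro power_le_one) (auto simp: power2_eq_square mult_le_one)
  finally show ?thesis .
qed

lemma Ksig_iterate_le_psi_mult:
  assumes "f \<in> borel_measurable borel" and "\<And>y. \<bar>f y\<bar> \<le> M * psi y"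
    and "0 < \<sigma>" and "0 \<le> p" and "p * sqrt (1 + real i * \<sigma>\<^sup>2) \<le> 1"
  shows "(Ksig \<sigma> ^^ i) f x \<le> M * psi (p * x)"
proof -
  have "(Ksig \<sigma> ^^ i) f x \<le> M * psi (x / sqrt (1 + real i * \<sigma>\<^sup>2))"
    using Ksig_iterate_abs_le[of f M 1 \<sigma> i x] assms by simp
  also have "\<dots> \<le> M * psi (p * x)"
    using assms psi_bound_nonneg[of f M 1]
    by (intro mult_left_mono psi_div_le_psi_mult) (auto simp: add_pos_nonneg)
  finally show ?thesis .
qed

lemma fseq_le_psi_mult:
  assumes "f \<in> borel_measurable borel" and "\<And>y. \<bar>f y\<bar> \<le> M * psi y"
    and "0 < \<sigma>" and "0 \<le> p" and "p * sqrt (1 + real j * \<sigma>\<^sup>2) \<le> 1"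
  shows "fseq f \<sigma> j x \<le> (2 ^ (j + 1) - 1) * M * psi (p * x)"
proof -
  have "fseq f \<sigma> j x \<le> (2 ^ (j + 1) - 1) * M * psi (x / sqrt (1 + real j * \<sigma>\<^sup>2))"
    using fseq_abs_le[of f M 1 \<sigma> j x] assms by simp
  also have "\<dots> \<le> (2 ^ (j + 1) - 1) * M * psi (p * x)"
    using assms psi_bound_nonneg[of f M 1] one_le_power[of "2::real" "j + 1"]
    by (intro mult_left_mono psi_div_le_psi_mult) (auto simp: add_pos_nonneg)
  finally show ?thesis .
qed

lemma gseq_le_max: "gseq f \<sigma> k x \<le> max (fseq f \<sigma> k x) (f x / 2)"
  by (simp add: gseq_def)

lemma half_le_gseq: "f x / 2 \<le> gseq f \<sigma> k x"
  by (simp add: gseq_def Jset_def)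

lemma hseq_le_twice_gseq:
  assumes f: "\<And>y. 0 \<le> f y" "integrable lborel f" "integral\<^sup>L lborel f = 1"
  shows "hseq f \<sigma> k x \<le> 2 * gseq f \<sigma> k x"
proof -
  have g0: "0 \<le> gseq f \<sigma> k x"
    using half_le_gseq[of f x \<sigma> k] f(1)[of x] by linarith
  show ?thesis
  proof (cases "integrable lborel (gseq f \<sigma> k)")
    case True
    have "integral\<^sup>L lborel (\<lambda>y. f y / 2) \<le> integral\<^sup>L lborel (gseq f \<sigma> k)"
      using f True half_le_gseq by (intro integral_mono) auto
    then have I: "1 \<le> 2 * integral\<^sup>L lborel (gseq f \<sigma> k)"
      using f by simp
    then have "gseq f \<sigma> k x \<le> 2 * gseq f \<sigma> k x * integral\<^sup>L lborel (gseq f \<sigma> k)"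
      using mult_left_mono[OF I g0] by (simp add: mult_ac)
    then show ?thesis
      using I by (simp add: hseq_def divide_le_eq)
  next
    case False
    then show ?thesis
      using g0 by (simp add: hseq_def not_integrable_integral_eq)
  qed
qed

lemma max_fseq_gseq_hseq_le:
  assumes f_meas: "f \<in> borel_measurable borel" and f_nonneg: "\<And>y. 0 \<le> f y"
    and f_integral: "integrable lborel f" "integral\<^sup>L lborel f = 1" and f_le: "\<And>y. f y \<le> M * psi y"
    and \<sigma>: "0 < \<sigma>" and p: "0 \<le> p" "p * sqrt (1 + real k * \<sigma>\<^sup>2) \<le> 1"
  shows "max (max (fseq f \<sigma> k x) (gseq f \<sigma> k x)) (hseq f \<sigma> k x / 2)
           \<le> (2 ^ (k + 1) - 1) * M * psi (p * x)"
proof -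
  have f_abs_le: "\<bar>f y\<bar> \<le> M * psi y" for y
    using f_nonneg[of y] f_le[of y] by simp
  have M: "0 \<le> M"
    using psi_bound_nonneg[of f M 1] f_abs_le by simp
  have "1 \<le> sqrt (1 + real k * \<sigma>\<^sup>2)"
    by simp
  then have "p * 1 \<le> p * sqrt (1 + real k * \<sigma>\<^sup>2)"
    using p(1) by (rule mult_left_mono)
  then have "p \<le> 1"
    using p(2) by linarith
  then have "f x \<le> M * psi (p * x)"
    using f_le[of x] p M psi_div_le_psi_mult[of 1 p x] by (simp add: order_trans mult_left_mono)
  moreover have "M \<le> (2 ^ (k + 1) - 1) * M"
    using M one_le_power[of "2::real" "k + 1"] mult_right_mono[of 1 "2 ^ (k + 1) - 1" M] by simp
  then have "M * psi (p * x) \<le> (2 ^ (k + 1) - 1) * M * psi (p * x)"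
    using psi_pos[of "p * x"] by (intro mult_right_mono) auto
  ultimately have "f x / 2 \<le> (2 ^ (k + 1) - 1) * M * psi (p * x)"
    using f_nonneg[of x] by linarith
  moreover have "fseq f \<sigma> k x \<le> (2 ^ (k + 1) - 1) * M * psi (p * x)"
    using f_meas f_abs_le \<sigma> p by (rule fseq_le_psi_mult)
  moreover have "hseq f \<sigma> k x \<le> 2 * gseq f \<sigma> k x"
    using f_nonneg f_integral by (rule hseq_le_twice_gseq)
  ultimately show ?thesis
    using gseq_le_max[of f \<sigma> k x] by auto
qed

lemma two_power_Suc_minus_one_le: "(2::real) ^ (k + 1) - 1 \<le> 2 * (4 / sqrt 3) ^ k"
proof -
  have "sqrt 3 \<le> (2::real)"
    using real_sqrt_le_mono[of 3 "2\<^sup>2"] by simp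
  then have "(2::real) ^ k \<le> (4 / sqrt 3) ^ k"
    by (intro power_mono) (auto simp: field_simps)
  then show ?thesis
    by simp
qed

theorem lemma14:
  fixes \<beta> \<gamma> lp \<epsilon> C \<alpha> \<xi> M p :: real and L :: "real poly" and k :: nat
    and f :: "real \<Rightarrow> real"
  assumes "0 < \<beta>" and "2 * real k < \<beta>" and "\<beta> \<le> 2 * real k + 2"
    and "0 < \<gamma>" and "0 < lp" and "0 < \<epsilon>" and "0 < C" and "0 < \<alpha>" and "0 < \<xi>" and "0 < M"
    and "f \<in> Hclass \<beta> \<gamma> lp L \<epsilon> C \<alpha> \<xi> M"
    and "0 < p" and "p < 1"
  shows "\<forall>x::real.
     (\<forall>i::nat. \<forall>\<sigma>::real. 1 \<le> i \<and> 0 < \<sigma> \<and> \<sigma> < 1 - p powr (1 / real i) \<longrightarrow>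
        (Ksig \<sigma> ^^ i) f x \<le> M * (2 / sqrt 3) ^ i * psi (p * x)) \<and>
     (\<forall>\<sigma>::real. 0 < \<sigma> \<and> \<sigma> < (if k = 0 then 1 else 1 - p powr (1 / real k)) \<longrightarrow>
        max (max (fseq f \<sigma> k x) (gseq f \<sigma> k x)) (hseq f \<sigma> k x / 2)
          \<le> 2 * M * (4 / sqrt 3) ^ k * psi (p * x))"
proof -
  have f_meas: "f \<in> borel_measurable borel" and f_pos: "\<And>x. 0 < f x"
    and f_norm: "(\<integral>\<^sup>+x. ennreal (f x) \<partial>lborel) = 1" and f_le: "\<And>x. f x \<le> M * psi x"
    using assms(11) unfolding Hclass_def Let_def by auto
  have "integrable lborel f \<and> integral\<^sup>L lborel f = 1"
    using f_meas f_pos f_norm by (subst nn_integral_eq_integrable[symmetric]) (auto intro: less_imp_le)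
  then have f_integral: "integrable lborel f" "integral\<^sup>L lborel f = 1"
    by auto
  show ?thesis
  proof (intro allI conjI impI)
    fix x \<sigma> :: real and i :: nat
    assume "1 \<le> i \<and> 0 < \<sigma> \<and> \<sigma> < 1 - p powr (1 / real i)"
    then have "(Ksig \<sigma> ^^ i) f x \<le> M * psi (p * x)"
      using assms(12) f_meas f_pos f_le
      by (intro Ksig_iterate_le_psi_mult mult_sqrt_one_plus_le_one) (auto simp: less_imp_le)
    also have "\<dots> \<le> M * (2 / sqrt 3) ^ i * psi (p * x)"
      using assms(10) psi_pos[of "p * x"] one_le_power[of "2 / sqrt 3" i] real_sqrt_le_mono[of 3 "2\<^sup>2"]
      by (simp add: mult_right_mono)
    finally show "(Ksig \<sigma> ^^ i) f x \<le> M * (2 / sqrt 3) ^ i * psi (p * x)" .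
  next
    fix x \<sigma> :: real
    assume \<sigma>: "0 < \<sigma> \<and> \<sigma> < (if k = 0 then 1 else 1 - p powr (1 / real k))"
    then have "p * sqrt (1 + real k * \<sigma>\<^sup>2) \<le> 1"
      using assms(12,13) by (cases "k = 0") (auto intro: mult_sqrt_one_plus_le_one)
    then have "max (max (fseq f \<sigma> k x) (gseq f \<sigma> k x)) (hseq f \<sigma> k x / 2)
                 \<le> (2 ^ (k + 1) - 1) * M * psi (p * x)"
      using f_meas f_pos f_integral f_le \<sigma> assms(12)
      by (intro max_fseq_gseq_hseq_le) (auto simp: less_imp_le)
    also have "\<dots> \<le> 2 * M * (4 / sqrt 3) ^ k * psi (p * x)"
      using two_power_Suc_minus_one_le[of k] assms(10) psi_pos[of "p * x"]
      by (simp add: mult_right_mono)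
    finally show "max (max (fseq f \<sigma> k x) (gseq f \<sigma> k x)) (hseq f \<sigma> k x / 2)
                    \<le> 2 * M * (4 / sqrt 3) ^ k * psi (p * x)" .
  qed
qed

end
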